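(* Let $k_1,k_2,k_3,k_4$ be nonzero real constants and consider the equation $$u_t=k_3 e^{k_4 u}+\frac{1}{x}\bigl(x k_1 e^{k_2 u} u_x\bigr)_x$$ together with its Lie point symmetry $X=(k_4-k_2)x\frac{\partial}{\partial x}+2k_4 t\frac{\partial}{\partial t}-2\frac{\partial}{\partial u}$. The invariant solution of this equation corresponding to $X$ is $$u=\ln\left(\frac{h\bigl(x^{2}t^{\frac{k_2}{k_4}-1}\bigr)^{\frac{1}{k_2}}}{t^{\frac{1}{k_4}}}\right),$$ where $h(z)$ satisfies the similarity reduction equation $$4k_1k_4 z h''(z)+\left(4k_1k_4+(k_4-k_2)\frac{z}{h(z)}\right)h'(z)+k_2k_3k_4\,(h(z))^{\frac{k_4}{k_2}}+k_2=0.$$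
   Context: A function $u=u(x,t)$ is an invariant solution of the equation corresponding to the infinitesimal symmetry $X=\xi\frac{\partial}{\partial x}+\tau\frac{\partial}{\partial t}+\eta\frac{\partial}{\partial u}$ if and only if (i) $u$ satisfies the equation and (ii) $u$ defines an invariant surface of $X$, i.e. $\xi\frac{\partial u}{\partial x}+\tau\frac{\partial u}{\partial t}-\eta=0$. Here $x>0$, $t>0$ (cylindrical radial variable and time), and $z=x^2t^{\frac{k_2}{k_4}-1}$ is the similarity variable. *)

theory Defs
  imports "HOL-Analysis.Analysis"
begin

definition satisfies_eq ::
  "real \<Rightarrow> real \<Rightarrow> real \<Rightarrow> real \<Rightarrow> (real \<Rightarrow> real \<Rightarrow> real)
   \<Rightarrow> (real \<Rightarrow> real \<Rightarrow> real) \<Rightarrow> (real \<Rightarrow> real \<Rightarrow> real) \<Rightarrow> bool" where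
  "satisfies_eq k1 k2 k3 k4 u ux ut \<longleftrightarrow>
     (\<forall>x t. x > 0 \<and> t > 0 \<longrightarrow>
        ((\<lambda>s. u s t) has_real_derivative ux x t) (at x) \<and>
        ((\<lambda>\<tau>. u x \<tau>) has_real_derivative ut x t) (at t) \<and>
        (\<exists>F. ((\<lambda>s. s * k1 * exp (k2 * u s t) * ux s t) has_real_derivative F) (at x) \<and>
             ut x t = k3 * exp (k4 * u x t) + F / x))"

text \<open>Invariant surface condition xi u_x + tau u_t - eta = 0 for
  X = (k4-k2) x d/dx + 2 k4 t d/dt - 2 d/du.\<close>
definition invariant_surface ::
  "real \<Rightarrow> real \<Rightarrow> (real \<Rightarrow> real \<Rightarrow> real) \<Rightarrow> (real \<Rightarrow> real \<Rightarrow> real) \<Rightarrow> bool" where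
  "invariant_surface k2 k4 ux ut \<longleftrightarrow>
     (\<forall>x t. x > 0 \<and> t > 0 \<longrightarrow>
        (k4 - k2) * x * ux x t + 2 * k4 * t * ut x t - (-2) = 0)"

definition invariant_solution ::
  "real \<Rightarrow> real \<Rightarrow> real \<Rightarrow> real \<Rightarrow> (real \<Rightarrow> real \<Rightarrow> real) \<Rightarrow> bool" where
  "invariant_solution k1 k2 k3 k4 u \<longleftrightarrow>
     (\<exists>ux ut. satisfies_eq k1 k2 k3 k4 u ux ut \<and> invariant_surface k2 k4 ux ut)"

end

theory Submission
  imports Defs
begin

text \<open>With \<open>z = x\<^sup>2 t\<^bsup>k2/k4 - 1\<^esup>\<close> the ansatz reads \<open>u = ln h(z) / k2 - ln t / k4\<close>, so
  \<open>x u_x = 2 z h'(z) / (k2 h(z))\<close> and \<open>t u_t = (k2/k4 - 1) z h'(z) / (k2 h(z)) - 1/k4\<close>.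
  Since \<open>k4 (k2/k4 - 1) = k2 - k4\<close>, the invariant surface condition holds for every \<open>h\<close>.
  The flux \<open>x k1 e\<^bsup>k2 u\<^esup> u_x\<close> collapses to \<open>2 k1 x\<^sup>2 h'(z) / (k2 t)\<close>, and then the
  difference of the two sides of the equation is the left-hand side of the reduction equation
  divided by \<open>-k2 k4 t\<close>.\<close>

lemma exp_mult_ln_powr_divide_powr:
  fixes y t :: real
  assumes "y > 0" "t > 0"
  shows "exp (c * ln (y powr p / t powr q)) = y powr (c * p) / t powr (c * q)"
  using assms by (simp add: ln_div exp_diff powr_def algebra_simps)

locale similarity_ansatz =
  fixes k2 k4 :: real and h h' :: "real \<Rightarrow> real"
  assumes k2: "k2 \<noteq> 0" and k4: "k4 \<noteq> 0"
    and h_pos: "\<And>z. z > 0 \<Longrightarrow> h z > 0"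
    and h_deriv: "\<And>z. z > 0 \<Longrightarrow> (h has_real_derivative h' z) (at z)"
begin

definition zeta :: "real \<Rightarrow> real \<Rightarrow> real" where
  "zeta x t = x\<^sup>2 * t powr (k2 / k4 - 1)"

definition u :: "real \<Rightarrow> real \<Rightarrow> real" where
  "u x t = ln (h (zeta x t) powr (1 / k2) / t powr (1 / k4))"

definition u_x :: "real \<Rightarrow> real \<Rightarrow> real" where
  "u_x x t = 2 * zeta x t * h' (zeta x t) / (k2 * h (zeta x t) * x)"

definition u_t :: "real \<Rightarrow> real \<Rightarrow> real" where
  "u_t x t = ((k2 / k4 - 1) * zeta x t * h' (zeta x t) / (k2 * h (zeta x t)) - 1 / k4) / t"

lemma zeta_pos: "x > 0 \<Longrightarrow> t > 0 \<Longrightarrow> zeta x t > 0"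
  by (simp add: zeta_def)

lemma h_zeta_pos: "x > 0 \<Longrightarrow> t > 0 \<Longrightarrow> h (zeta x t) > 0"
  by (simp add: h_pos zeta_pos)

lemma u_eq_ln:
  assumes "x > 0" "t > 0"
  shows "u x t = ln (h (zeta x t)) / k2 - ln t / k4"
  using h_zeta_pos[OF assms] assms by (simp add: u_def ln_div)

lemma exp_k2_u:
  assumes "x > 0" "t > 0"
  shows "exp (k2 * u x t) = h (zeta x t) / t powr (k2 / k4)"
  using h_zeta_pos[OF assms] assms k2 by (simp add: u_def exp_mult_ln_powr_divide_powr)

lemma exp_k4_u:
  assumes "x > 0" "t > 0"
  shows "exp (k4 * u x t) = h (zeta x t) powr (k4 / k2) / t"
  using h_zeta_pos[OF assms] assms k4 by (simp add: u_def exp_mult_ln_powr_divide_powr)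

lemma DERIV_h_comp [derivative_intros]:
  "g x > 0 \<Longrightarrow> (g has_real_derivative D) (at x) \<Longrightarrow>
    ((\<lambda>s. h (g s)) has_real_derivative h' (g x) * D) (at x)"
  by (rule DERIV_chain2[OF h_deriv])

lemma DERIV_zeta_x: "((\<lambda>s. zeta s t) has_real_derivative 2 * x * t powr (k2 / k4 - 1)) (at x)"
  unfolding zeta_def by (auto intro!: derivative_eq_intros)

lemma DERIV_zeta_t:
  assumes "t > 0"
  shows "((\<lambda>\<tau>. zeta x \<tau>) has_real_derivative (k2 / k4 - 1) * zeta x t / t) (at t)"
proof -
  have "((\<lambda>\<tau>. zeta x \<tau>) has_real_derivative x\<^sup>2 * ((k2 / k4 - 1) * t powr (k2 / k4 - 1 - 1))) (at t)"
    unfolding zeta_def using assms by (auto intro!: derivative_eq_intros)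
  then show ?thesis
    by (rule DERIV_cong) (use assms in \<open>simp add: zeta_def powr_diff power2_eq_square\<close>)
qed

lemma DERIV_u_x:
  assumes "x > 0" "t > 0"
  shows "((\<lambda>s. u s t) has_real_derivative u_x x t) (at x)"
proof -
  have "((\<lambda>s. ln (h (zeta s t)) / k2 - ln t / k4) has_real_derivative u_x x t) (at x)"
    using assms h_zeta_pos[OF assms] k2
    by (auto intro!: derivative_eq_intros DERIV_zeta_x zeta_pos
        simp: u_x_def zeta_def field_simps power2_eq_square)
  then show ?thesis
    by (rule has_field_derivative_transform_within_open[where S = "{0<..}"])
      (use assms u_eq_ln in auto)
qed

lemma DERIV_u_t:
  assumes "x > 0" "t > 0"
  shows "((\<lambda>\<tau>. u x \<tau>) has_real_derivative u_t x t) (at t)"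
proof -
  have "((\<lambda>\<tau>. ln (h (zeta x \<tau>)) / k2 - ln \<tau> / k4) has_real_derivative u_t x t) (at t)"
    using assms h_zeta_pos[OF assms] k2 k4
    by (auto intro!: derivative_eq_intros DERIV_zeta_t zeta_pos simp: u_t_def field_simps)
  then show ?thesis
    by (rule has_field_derivative_transform_within_open[where S = "{0<..}"])
      (use assms u_eq_ln in auto)
qed

lemma invariant_surface_u: "invariant_surface k2 k4 u_x u_t"
  unfolding invariant_surface_def
proof (intro allI impI, elim conjE)
  fix x t :: real
  assume "x > 0" "t > 0"
  with h_zeta_pos[OF this] k2 k4
  show "(k4 - k2) * x * u_x x t + 2 * k4 * t * u_t x t - (-2) = 0"
    by (simp add: u_x_def u_t_def field_simps)
qed

end

locale similarity_reduction = similarity_ansatz +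
  fixes k1 k3 :: real and h'' :: "real \<Rightarrow> real"
  assumes h'_deriv: "\<And>z. z > 0 \<Longrightarrow> (h' has_real_derivative h'' z) (at z)"
    and reduced_ode: "\<And>z. z > 0 \<Longrightarrow>
       4 * k1 * k4 * z * h'' z + (4 * k1 * k4 + (k4 - k2) * z / h z) * h' z
       + k2 * k3 * k4 * (h z) powr (k4 / k2) + k2 = 0"
begin

lemma DERIV_h'_comp [derivative_intros]:
  "g x > 0 \<Longrightarrow> (g has_real_derivative D) (at x) \<Longrightarrow>
    ((\<lambda>s. h' (g s)) has_real_derivative h'' (g x) * D) (at x)"
  by (rule DERIV_chain2[OF h'_deriv])

lemma flux_eq:
  assumes "x > 0" "t > 0"
  shows "x * k1 * exp (k2 * u x t) * u_x x t = 2 * k1 / (k2 * t) * (x\<^sup>2 * h' (zeta x t))"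
  using assms h_zeta_pos[OF assms] k2
  by (simp add: exp_k2_u u_x_def zeta_def powr_diff field_simps power2_eq_square)

lemma DERIV_flux:
  assumes "x > 0" "t > 0"
  shows "((\<lambda>s. s * k1 * exp (k2 * u s t) * u_x s t) has_real_derivative
           4 * k1 * x * (h' (zeta x t) + zeta x t * h'' (zeta x t)) / (k2 * t)) (at x)"
proof -
  have "((\<lambda>s. 2 * k1 / (k2 * t) * (s\<^sup>2 * h' (zeta s t))) has_real_derivative
           4 * k1 * x * (h' (zeta x t) + zeta x t * h'' (zeta x t)) / (k2 * t)) (at x)"
    using assms k2
    by (auto intro!: derivative_eq_intros DERIV_zeta_x zeta_pos
        simp: zeta_def field_simps power2_eq_square)
  then show ?thesis
    by (rule has_field_derivative_transform_within_open[where S = "{0<..}"])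
      (use assms flux_eq in auto)
qed

lemma u_t_eq:
  assumes "x > 0" "t > 0"
  shows "u_t x t = k3 * exp (k4 * u x t)
           + 4 * k1 * (h' (zeta x t) + zeta x t * h'' (zeta x t)) / (k2 * t)"
proof -
  define z where "z = zeta x t"
  have "h z > 0" unfolding z_def using h_zeta_pos[OF assms] .
  then have "u_t x t - (k3 * exp (k4 * u x t) + 4 * k1 * (h' z + z * h'' z) / (k2 * t))
      = - (4 * k1 * k4 * z * h'' z + (4 * k1 * k4 + (k4 - k2) * z / h z) * h' z
           + k2 * k3 * k4 * (h z) powr (k4 / k2) + k2) / (k2 * k4 * t)"
    using assms k2 k4 by (simp add: exp_k4_u u_t_def z_def[symmetric] field_simps)
  also have "\<dots> = 0"
    using reduced_ode[OF zeta_pos[OF assms]] by (simp add: z_def)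
  finally show ?thesis by (simp add: z_def)
qed

lemma satisfies_eq_u: "satisfies_eq k1 k2 k3 k4 u u_x u_t"
  unfolding satisfies_eq_def
proof (intro allI impI conjI exI; elim conjE)
  fix x t :: real
  assume xt: "x > 0" "t > 0"
  show "((\<lambda>s. u s t) has_real_derivative u_x x t) (at x)"
    using DERIV_u_x[OF xt] .
  show "((\<lambda>\<tau>. u x \<tau>) has_real_derivative u_t x t) (at t)"
    using DERIV_u_t[OF xt] .
  show "((\<lambda>s. s * k1 * exp (k2 * u s t) * u_x s t) has_real_derivative
           4 * k1 * x * (h' (zeta x t) + zeta x t * h'' (zeta x t)) / (k2 * t)) (at x)"
    using DERIV_flux[OF xt] .
  show "u_t x t = k3 * exp (k4 * u x t)
           + 4 * k1 * x * (h' (zeta x t) + zeta x t * h'' (zeta x t)) / (k2 * t) / x"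
    using u_t_eq[OF xt] xt by simp
qed

end

theorem theorem2:
  fixes k1 k2 k3 k4 :: real and h h' h'' :: "real \<Rightarrow> real"
  assumes "k1 \<noteq> 0" "k2 \<noteq> 0" "k3 \<noteq> 0" "k4 \<noteq> 0"
    and hpos: "\<And>z. z > 0 \<Longrightarrow> h z > 0"
    and hd1: "\<And>z. z > 0 \<Longrightarrow> (h has_real_derivative h' z) (at z)"
    and hd2: "\<And>z. z > 0 \<Longrightarrow> (h' has_real_derivative h'' z) (at z)"
    and ode: "\<And>z. z > 0 \<Longrightarrow>
       4 * k1 * k4 * z * h'' z + (4 * k1 * k4 + (k4 - k2) * z / h z) * h' z
       + k2 * k3 * k4 * (h z) powr (k4 / k2) + k2 = 0"
  shows "invariant_solution k1 k2 k3 k4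
           (\<lambda>x t. ln (h (x\<^sup>2 * t powr (k2 / k4 - 1)) powr (1 / k2) / t powr (1 / k4)))"
proof -
  interpret similarity_reduction k2 k4 h h' k1 k3 h''
    using assms by unfold_locales auto
  have "(\<lambda>x t. ln (h (x\<^sup>2 * t powr (k2 / k4 - 1)) powr (1 / k2) / t powr (1 / k4))) = u"
    by (simp add: fun_eq_iff u_def zeta_def)
  then show ?thesis
    unfolding invariant_solution_def using satisfies_eq_u invariant_surface_u by auto
qed

end
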